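(* Let $g_1,f_1,f_2$ be real numbers with $f_1\neq 0$, and let $g(t)=1+g_1t$ and $f(t)=f_1t+f_2t^2$. Then the quasi-Riordan array $[g,f]$, i.e. the infinite lower triangular matrix \[ [g,f]=\begin{bmatrix} 1& & & & \\ g_1 & f_1 & & & \\ 0& f_2& f_1 & & \\ 0&0 & f_2 & f_1&\\ \vdots& &\ddots &\ddots &\ddots\end{bmatrix}, \] is totally positive if and only if $g_1\ge 0$, $f_1\ge 0$ and $f_2\ge 0$.
   Context: For formal power series $g(t)=\sum_{n\ge0}g_nt^n$ with $g_0=1$ and $f(t)=\sum_{n\ge1}f_nt^n$ with $f_1\neq0$, the quasi-Riordan array $[g,f]$ is the infinite lower triangular matrix $(r_{n,k})_{n,k\ge0}$ whose $0$th column has generating function $g$ and whose $k$th column ($k\ge1$) has generating function $t^{k-1}f(t)$; i.e. $r_{n,0}=g_n$ and $r_{n,k}=f_{n-k+1}$ for $k\ge1$ (with $f_j=0$ for $j\le 0$). An infinite matrix is totally positive (TP) if all its minors (of all orders) are nonnegative. *)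

theory Defs
  imports Complex_Main "HOL-Combinatorics.Permutations"
begin

text \<open>Infinite matrices are functions nat => nat => real (row index, column index).\<close>

definition det_fin :: "nat \<Rightarrow> (nat \<Rightarrow> nat \<Rightarrow> real) \<Rightarrow> real" where
  "det_fin k A = (\<Sum>p | p permutes {..<k}. of_int (sign p) * (\<Prod>i<k. A i (p i)))"

definition minor :: "(nat \<Rightarrow> nat \<Rightarrow> real) \<Rightarrow> nat \<Rightarrow> (nat \<Rightarrow> nat) \<Rightarrow> (nat \<Rightarrow> nat) \<Rightarrow> real" where
  "minor M k I J = det_fin k (\<lambda>i j. M (I i) (J j))"

definition totally_positive :: "(nat \<Rightarrow> nat \<Rightarrow> real) \<Rightarrow> bool" where
  "totally_positive M \<longleftrightarrow>
     (\<forall>k I J. strict_mono_on {..<k} I \<longrightarrow> strict_mono_on {..<k} J \<longrightarrow> minor M k I J \<ge> 0)"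

text \<open>Quasi-Riordan array [g,f] from coefficient sequences g (with g 0 = 1) and f (f 0 = 0 ignored):
  r n 0 = g n, and r n k = f (n-k+1) for k >= 1 (zero when n - k + 1 <= 0).\<close>
definition quasi_riordan :: "(nat \<Rightarrow> real) \<Rightarrow> (nat \<Rightarrow> real) \<Rightarrow> nat \<Rightarrow> nat \<Rightarrow> real" where
  "quasi_riordan g f n k = (if k = 0 then g n else if k \<le> n then f (n - k + 1) else 0)"

end

theory Submission
  imports Defs
begin

text \<open>In the Leibniz expansion of a minor of a lower bidiagonal matrix, a nonzero term forces
  the permutation to preserve the order of the (strictly increasing) row and column indices;
  hence only the identity contributes, and the minor is a product of entries. Conversely,
  the entries themselves are the 1 x 1 minors, and g1, f1, f2 occur among them.\<close>

lemma permutes_strict_mono_on_eq_id: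
  fixes p :: "nat \<Rightarrow> nat"
  assumes perm: "p permutes {..<k}" and mono: "strict_mono_on {..<k} p"
  shows "p = id"
proof -
  have "map p [0..<k] = [0..<k]"
  proof (rule sorted_distinct_set_unique)
    show "sorted (map p [0..<k])"
      using strict_mono_on_imp_mono_on[OF mono] by (auto simp: sorted_iff_nth_mono mono_on_def)
    show "distinct (map p [0..<k])"
      using permutes_inj_on[OF perm] by (simp add: distinct_map inj_on_subset)
    show "set (map p [0..<k]) = set [0..<k]"
      using permutes_image[OF perm] by (simp add: lessThan_atLeast0)
  qed simp_all
  then have "p i = i" if "i < k" for i
    using that by (metis add_0 diff_zero length_upt nth_map nth_upt)
  then show ?thesis
    using permutes_not_in[OF perm] by (metis eq_id_iff lessThan_iff)
qed

definition lower_bidiagonal :: "(nat \<Rightarrow> nat \<Rightarrow> real) \<Rightarrow> bool" where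
  "lower_bidiagonal M \<longleftrightarrow> (\<forall>n k. M n k \<noteq> 0 \<longrightarrow> k \<le> n \<and> n \<le> Suc k)"

lemma lower_bidiagonal_nonzero_term_strict_mono:
  fixes I J p :: "nat \<Rightarrow> nat"
  assumes M: "lower_bidiagonal M"
    and I: "strict_mono_on {..<k} I" and J: "strict_mono_on {..<k} J"
    and perm: "p permutes {..<k}"
    and nonzero: "\<And>i. i < k \<Longrightarrow> M (I i) (J (p i)) \<noteq> 0"
  shows "strict_mono_on {..<k} p"
proof (rule strict_mono_onI)
  fix i i' assume "i \<in> {..<k}" "i' \<in> {..<k}" "i < i'"
  then have i: "i < k" and i': "i' < k" and "i < i'" by auto
  show "p i < p i'"
  proof (rule ccontr)
    assume "\<not> p i < p i'"
    moreover have "p i \<noteq> p i'"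
      using permutes_inj[OF perm] \<open>i < i'\<close> by (metis inj_eq less_irrefl)
    ultimately have "p i' < p i" by simp
    then have "J (p i') < J (p i)"
      using permutes_in_image[OF perm] i i' by (intro strict_mono_onD[OF J]) auto
    moreover have "I i < I i'"
      using i i' \<open>i < i'\<close> by (intro strict_mono_onD[OF I]) auto
    moreover have "J (p i) \<le> I i" and "I i' \<le> Suc (J (p i'))"
      using M nonzero[OF i] nonzero[OF i'] by (auto simp: lower_bidiagonal_def)
    ultimately show False by simp
  qed
qed

lemma nonneg_lower_bidiagonal_totally_positive:
  assumes nonneg: "\<And>n k. M n k \<ge> 0" and M: "lower_bidiagonal M"
  shows "totally_positive M"
  unfolding totally_positive_def minor_def det_fin_def
proof (intro allI impI sum_nonneg)
  fix k and I J p :: "nat \<Rightarrow> nat"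
  assume I: "strict_mono_on {..<k} I" and J: "strict_mono_on {..<k} J"
    and "p \<in> {p. p permutes {..<k}}"
  then have perm: "p permutes {..<k}" by simp
  show "0 \<le> of_int (sign p) * (\<Prod>i<k. M (I i) (J (p i)))"
  proof (cases "\<forall>i<k. M (I i) (J (p i)) \<noteq> 0")
    case True
    then have "p = id"
      using lower_bidiagonal_nonzero_term_strict_mono[OF M I J perm]
        permutes_strict_mono_on_eq_id[OF perm] by blast
    then show ?thesis
      using nonneg by (simp add: prod_nonneg)
  next
    case False
    then have "(\<Prod>i<k. M (I i) (J (p i))) = 0"
      by (intro prod_zero) auto
    then show ?thesis
      by (simp only: mult_zero_right order_refl)
  qed
qed

lemma minor_order_one: "minor M 1 (\<lambda>_. n) (\<lambda>_. m) = M n m"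
proof -
  have "{p. p permutes {..<1::nat}} = {id}"
    by (simp add: lessThan_Suc)
  then show ?thesis
    by (simp add: minor_def det_fin_def)
qed

lemma totally_positive_imp_nonneg:
  assumes "totally_positive M"
  shows "M n m \<ge> 0"
proof -
  have "strict_mono_on {..<1} (\<lambda>_::nat. i)" for i :: nat
    by (auto simp: strict_mono_on_def)
  then have "minor M 1 (\<lambda>_. n) (\<lambda>_. m) \<ge> 0"
    using assms unfolding totally_positive_def by blast
  then show ?thesis
    by (simp only: minor_order_one)
qed

lemma quasi_riordan_lower_bidiagonal:
  assumes "\<And>n. n \<ge> 2 \<Longrightarrow> g n = 0" and "\<And>n. n > 2 \<Longrightarrow> f n = 0"
  shows "lower_bidiagonal (quasi_riordan g f)"
  unfolding lower_bidiagonal_def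
proof (intro allI impI)
  fix n k
  assume nonzero: "quasi_riordan g f n k \<noteq> 0"
  show "k \<le> n \<and> n \<le> Suc k"
  proof (cases "k = 0")
    case True
    then show ?thesis
      using nonzero assms(1)[of n] by (cases "n \<ge> 2") (auto simp: quasi_riordan_def)
  next
    case False
    then show ?thesis
      using nonzero assms(2)[of "n - k + 1"]
      by (cases "n - k + 1 > 2") (auto simp: quasi_riordan_def split: if_splits)
  qed
qed

text \<open>The hypothesis f1 \<noteq> 0 only makes [g,f] a genuine quasi-Riordan array; the
  characterisation does not need it.\<close>

theorem corollary2p2:
  fixes g1 f1 f2 :: real
  assumes "f1 \<noteq> 0"
  shows "totally_positive
           (quasi_riordan (\<lambda>n. if n = 0 then 1 else if n = 1 then g1 else 0)
                          (\<lambda>n. if n = 1 then f1 else if n = 2 then f2 else 0))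
         \<longleftrightarrow> g1 \<ge> 0 \<and> f1 \<ge> 0 \<and> f2 \<ge> 0"
  (is "totally_positive ?M \<longleftrightarrow> _")
proof
  assume "totally_positive ?M"
  then have "?M 1 0 \<ge> 0" "?M 1 1 \<ge> 0" "?M 2 1 \<ge> 0"
    by (simp_all only: totally_positive_imp_nonneg)
  then show "g1 \<ge> 0 \<and> f1 \<ge> 0 \<and> f2 \<ge> 0"
    by (simp add: quasi_riordan_def)
next
  assume "g1 \<ge> 0 \<and> f1 \<ge> 0 \<and> f2 \<ge> 0"
  then have "?M n k \<ge> 0" for n k
    by (auto simp: quasi_riordan_def)
  moreover have "lower_bidiagonal ?M"
    by (rule quasi_riordan_lower_bidiagonal) auto
  ultimately show "totally_positive ?M"
    by (rule nonneg_lower_bidiagonal_totally_positive)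
qed

end
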